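(* Let $S=\{x_0x_2x_3=x_1^3\}\subset\mathbb P^3$, with singular points $p_0=[1:0:0:0]$, $p_2=[0:0:1:0]$, $p_3=[0:0:0:1]$ (all of type $\boldsymbol A_2$), and let $H_*=\{x_1=0\}|_S=\overline{p_0p_2}+\overline{p_0p_3}+\overline{p_2p_3}$. For $i\in\{0,2,3\}$ let $\mathcal H_i\subset|-K_S|=|\mathcal O_S(1)|\cong(\mathbb P^3)^*$ be the net of hyperplane sections whose base locus is $p_i$, and let $j,k$ be such that $\{i,j,k\}=\{0,2,3\}$. Then $\mathcal H_i$ contains three pencils $\mathcal H_i^1,\mathcal H_i^2,\mathcal H_i^3\subset\mathcal H_i$ whose common intersection is empty and such that: (i) the elements of $|-K_S|\setminus\bigcup_i\mathcal H_i$ are the hyperplane sections containing none of $p_0,p_2,p_3$; (ii) the elements of $\mathcal H_i\setminus(\mathcal H_i^1\cup\mathcal H_i^2\cup\mathcal H_i^3)$ are irreducible plane cubic curves with precisely one nodal ($\boldsymbol A_1$) singularity, supported at $p_i$; (iii) $\mathcal H_i^2\cap\mathcal H_i^3=H_*$, $\mathcal H_i^1\cap\mathcal H_i^2=3\overline{p_ip_j}$ and $\mathcal H_i^1\cap\mathcal H_i^3=3\overline{p_ip_k}$; (iv) the elements of $\mathcal H_i^2\setminus(\mathcal H_i^1\cup\mathcal H_i^3)=\mathcal H_i^2\setminus\{H_*,3\overline{p_ip_j}\}$ are reducible plane cubics $\overline{p_ip_j}+C$ with $C$ an irreducible plane conic containing $p_i,p_j$ and coplanar with $\overline{p_ip_j}$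 (respectively, the elements of $\mathcal H_i^3\setminus(\mathcal H_i^1\cup\mathcal H_i^2)=\mathcal H_i^3\setminus\{H_*,3\overline{p_ip_k}\}$ are $\overline{p_ip_k}+C$ with $C$ an irreducible plane conic containing $p_i,p_k$ and coplanar with $\overline{p_ip_k}$); (v) the elements of $\mathcal H_i^1\setminus\{3\overline{p_ip_j},3\overline{p_ip_k}\}$ are irreducible plane cubic curves meeting $\overline{p_ip_j}$ and $\overline{p_ip_k}$ only at $p_i$, meeting $\overline{p_jp_k}$ away from $p_j$ and $p_k$, and having precisely one cuspidal ($\boldsymbol A_2$) singularity, supported at $p_i$.
   Context: $\overline{p_ip_j}$ denotes the line in $S$ through $p_i$ and $p_j$; $3\overline{p_ip_j}$ is that line with multiplicity three (a hyperplane section of $S$). *)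

theory Defs
  imports "HOL-Analysis.Analysis"
begin

text \<open>Homogeneous coordinates x0,x1,x2,x3 of P^3 over the complex numbers are the
components 0,1,2,3 of a vector in complex^4.  A point of P^3 is represented by any
nonzero vector; a hyperplane (an element of (P^3)^* = |O_S(1)| = |-K_S|) by any nonzero
coefficient vector a, the hyperplane being {x. a0 x0 + a1 x1 + a2 x2 + a3 x3 = 0}.
All notions below are invariant under rescaling.\<close>

type_synonym cvec = "complex ^ 4"

definition dotc :: "cvec \<Rightarrow> cvec \<Rightarrow> complex" where
  "dotc a x = (\<Sum>m\<in>UNIV. a $ m * x $ m)"

text \<open>Standard basis vector: coordinate point p_k, or the hyperplane {x_k = 0}.\<close>
definition ebas :: "4 \<Rightarrow> cvec" where
  "ebas k = (\<chi> m. if m = k then 1 else 0)"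

definition Fcub :: "cvec \<Rightarrow> complex" where
  "Fcub x = x $ 0 * x $ 2 * x $ 3 - (x $ 1) ^ 3"

definition sec_pts :: "cvec \<Rightarrow> cvec set" where
  "sec_pts a = {x. x \<noteq> 0 \<and> dotc a x = 0 \<and> Fcub x = 0}"

definition lineP :: "cvec \<Rightarrow> cvec \<Rightarrow> cvec set" where
  "lineP p q = {s *s p + t *s q | s t. True}"

text \<open>Pencil (projective line in (P^3)^*) spanned by u and v, as a linear subspace.\<close>
definition pencil :: "cvec \<Rightarrow> cvec \<Rightarrow> cvec set" where
  "pencil u v = {s *s u + t *s v | s t. True}"

definition indep2 :: "cvec \<Rightarrow> cvec \<Rightarrow> bool" where
  "indep2 u v \<longleftrightarrow> (\<forall>s t. s *s u + t *s v = 0 \<longrightarrow> s = 0 \<and> t = 0)"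

definition indep3 :: "cvec \<Rightarrow> cvec \<Rightarrow> cvec \<Rightarrow> bool" where
  "indep3 p u v \<longleftrightarrow> (\<forall>r s t. r *s p + s *s u + t *s v = 0 \<longrightarrow> r = 0 \<and> s = 0 \<and> t = 0)"

definition quadf :: "complex ^ 4 ^ 4 \<Rightarrow> cvec \<Rightarrow> complex" where
  "quadf M x = (\<Sum>i\<in>UNIV. \<Sum>j\<in>UNIV. M $ i $ j * x $ i * x $ j)"

definition reducible_sec :: "cvec \<Rightarrow> bool" where
  "reducible_sec a \<longleftrightarrow> (\<exists>b M. (\<exists>x. dotc a x = 0 \<and> dotc b x \<noteq> 0) \<and>
      (\<forall>x. dotc a x = 0 \<longrightarrow> Fcub x = dotc b x * quadf M x))"

definition irreducible_sec :: "cvec \<Rightarrow> bool" where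
  "irreducible_sec a \<longleftrightarrow> a \<noteq> 0 \<and> \<not> reducible_sec a"

text \<open>The hyperplane section cut by a is the divisor 3 * (line pq), i.e. F restricted to
the plane is c * l^3 with l a linear form on the plane whose zero locus is the line pq.\<close>
definition triple_line_sec :: "cvec \<Rightarrow> cvec \<Rightarrow> cvec \<Rightarrow> bool" where
  "triple_line_sec a p q \<longleftrightarrow> a \<noteq> 0 \<and> dotc a p = 0 \<and> dotc a q = 0 \<and>
     (\<exists>b c. c \<noteq> 0 \<and> dotc b p = 0 \<and> dotc b q = 0 \<and> (\<exists>x. dotc a x = 0 \<and> dotc b x \<noteq> 0) \<and>
        (\<forall>x. dotc a x = 0 \<longrightarrow> Fcub x = c * (dotc b x) ^ 3))"

text \<open>The hyperplane section cut by a is (line pq) + C with C an irreducible plane conic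
in the same plane passing through p and q.\<close>
definition line_plus_conic_sec :: "cvec \<Rightarrow> cvec \<Rightarrow> cvec \<Rightarrow> bool" where
  "line_plus_conic_sec a p q \<longleftrightarrow> a \<noteq> 0 \<and> dotc a p = 0 \<and> dotc a q = 0 \<and>
     (\<exists>b M. dotc b p = 0 \<and> dotc b q = 0 \<and> (\<exists>x. dotc a x = 0 \<and> dotc b x \<noteq> 0) \<and>
        (\<forall>x. dotc a x = 0 \<longrightarrow> Fcub x = dotc b x * quadf M x) \<and>
        quadf M p = 0 \<and> quadf M q = 0 \<and>
        \<not> (\<exists>b1 b2. \<forall>x. dotc a x = 0 \<longrightarrow> quadf M x = dotc b1 x * dotc b2 x))"

definition sing_pt :: "cvec \<Rightarrow> cvec \<Rightarrow> bool" where
  "sing_pt a x \<longleftrightarrow> x \<noteq> 0 \<and> dotc a x = 0 \<and> Fcub x = 0 \<and>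
     (\<forall>w. dotc a w = 0 \<longrightarrow> ((\<lambda>t. Fcub (x + t *s w)) has_field_derivative 0) (at 0))"

text \<open>Local equation of the plane curve at p in an affine chart (s,t) \<mapsto> p + s u + t v of
the plane: it has no constant or linear terms, quadratic part
c20 s^2 + c11 s t + c02 t^2 and cubic part d30 s^3 + d21 s^2 t + d12 s t^2 + d03 t^3.\<close>
definition local_jet :: "cvec \<Rightarrow> cvec \<Rightarrow> complex \<Rightarrow> complex \<Rightarrow> complex \<Rightarrow>
    complex \<Rightarrow> complex \<Rightarrow> complex \<Rightarrow> complex \<Rightarrow> bool" where
  "local_jet a p c20 c11 c02 d30 d21 d12 d03 \<longleftrightarrow> a \<noteq> 0 \<and> dotc a p = 0 \<and>
     (\<exists>u v. dotc a u = 0 \<and> dotc a v = 0 \<and> indep3 p u v \<and>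
        (\<forall>s t. Fcub (p + s *s u + t *s v) =
            c20 * s^2 + c11 * s * t + c02 * t^2 +
            d30 * s^3 + d21 * s^2 * t + d12 * s * t^2 + d03 * t^3))"

text \<open>A_1 (node): the quadratic part of the local equation is nondegenerate.\<close>
definition node_at :: "cvec \<Rightarrow> cvec \<Rightarrow> bool" where
  "node_at a p \<longleftrightarrow> (\<exists>c20 c11 c02 d30 d21 d12 d03.
      local_jet a p c20 c11 c02 d30 d21 d12 d03 \<and> c11^2 - 4 * c20 * c02 \<noteq> 0)"

text \<open>A_2 (cusp): the quadratic part is the nonzero square of a linear form l and the
cubic part does not vanish on the kernel direction of l (local equation l^2 + g3 + ...
with l not dividing g3, the 3-jet of y^2 + x^3).\<close>
definition cusp_at :: "cvec \<Rightarrow> cvec \<Rightarrow> bool" where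
  "cusp_at a p \<longleftrightarrow> (\<exists>c20 c11 c02 d30 d21 d12 d03.
      local_jet a p c20 c11 c02 d30 d21 d12 d03 \<and>
      c11^2 - 4 * c20 * c02 = 0 \<and> \<not> (c20 = 0 \<and> c11 = 0 \<and> c02 = 0) \<and>
      (\<forall>s0 t0. (s0, t0) \<noteq> (0, 0) \<and> c20 * s0^2 + c11 * s0 * t0 + c02 * t0^2 = 0 \<longrightarrow>
         d30 * s0^3 + d21 * s0^2 * t0 + d12 * s0 * t0^2 + d03 * t0^3 \<noteq> 0))"

definition net :: "4 \<Rightarrow> cvec set" where
  "net i = {a. a \<noteq> 0 \<and> dotc a (ebas i) = 0}"

definition ppt :: "cvec \<Rightarrow> cvec set" where
  "ppt p = {c *s p | c. c \<noteq> 0}"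

end

theory Submission
  imports Defs
begin

text \<open>
  The cubic form x0 x2 x3 - x1^3 is symmetric in x0, x2, x3, so for any labelling
  {i, j, k} = {0, 2, 3} it reads x_i x_j x_k - x_1^3 and everything reduces to explicit
  computations in these coordinates. The net H_i is {a_i = 0}, and the three pencils are its
  coordinate pencils H_i^1 = {a_1 = 0}, H_i^2 = {a_j = 0}, H_i^3 = {a_k = 0}, spanned by
  (e_j, e_k), (e_1, e_k) and (e_1, e_j). For a plane through p_i with a_j, a_k nonzero, the
  chart p_i + s (a_1 e_j - a_j e_1) + t (a_1 e_k - a_k e_1) gives the local equation
  a_1^2 s t + (a_j s + a_k t)^3, a node when a_1 is nonzero; when a_1 = 0 the chart
  p_i + s e_1 + t (a_k e_j - a_j e_k) gives - a_j a_k t^2 - s^3, a cusp. Irreducibility holds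
  because a reducible plane cubic contains a line of its plane, and a direct check shows that
  no such line lies on S for these planes. On H_i^2 the cubic splits as
  x_k (x_i x_j + (a_k / a_1)^3 x_k^2) with a nondegenerate conic.
\<close>

lemma ebas_nth [simp]: "ebas p $ q = (if q = p then 1 else 0)"
  by (simp add: ebas_def)

lemma dotc_ebas_right [simp]: "dotc a (ebas p) = a $ p"
  by (simp add: dotc_def ebas_def if_distrib cong: if_cong)

lemma dotc_ebas_left [simp]: "dotc (ebas p) x = x $ p"
  by (simp add: dotc_def ebas_def if_distrib if_distribR cong: if_cong)

lemma ebas_nonzero [simp]: "ebas m \<noteq> 0"
  by (metis ebas_nth zero_index zero_neq_one)

lemma Fcub_ebas: "Fcub (ebas m) = (if m = 1 then -1 else 0)"
  by (simp add: Fcub_def)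

lemma sections_avoiding_vertices:
  "{a. a \<noteq> 0 \<and> a \<notin> net 0 \<union> net 2 \<union> net 3} =
   {a. a \<noteq> 0 \<and> ebas 0 \<notin> sec_pts a \<and> ebas 2 \<notin> sec_pts a \<and> ebas 3 \<notin> sec_pts a}"
  by (auto simp: net_def sec_pts_def Fcub_ebas)

lemma zero_in_pencil [simp]: "0 \<in> pencil u v"
  unfolding pencil_def by (auto intro!: exI[of _ 0])

lemma pencil_commute: "pencil u v = pencil v u"
  unfolding pencil_def using add.commute by blast

lemma pencil_ebas_iff:
  assumes "p \<noteq> q"
  shows "a \<in> pencil (ebas p) (ebas q) \<longleftrightarrow> (\<forall>m. m \<noteq> p \<and> m \<noteq> q \<longrightarrow> a $ m = 0)"
proof
  assume "\<forall>m. m \<noteq> p \<and> m \<noteq> q \<longrightarrow> a $ m = 0"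
  then have "a = a $ p *s ebas p + a $ q *s ebas q"
    using assms by (auto simp: vec_eq_iff)
  then show "a \<in> pencil (ebas p) (ebas q)"
    unfolding pencil_def by blast
qed (auto simp: pencil_def)

lemma lineP_ebas_iff:
  "p \<noteq> q \<Longrightarrow> x \<in> lineP (ebas p) (ebas q) \<longleftrightarrow> (\<forall>m. m \<noteq> p \<and> m \<noteq> q \<longrightarrow> x $ m = 0)"
  using pencil_ebas_iff by (simp add: lineP_def pencil_def)

lemma ppt_ebas_iff: "a \<in> ppt (ebas p) \<longleftrightarrow> a $ p \<noteq> 0 \<and> (\<forall>m. m \<noteq> p \<longrightarrow> a $ m = 0)"
proof
  assume "a $ p \<noteq> 0 \<and> (\<forall>m. m \<noteq> p \<longrightarrow> a $ m = 0)"
  then have "a = a $ p *s ebas p \<and> a $ p \<noteq> 0"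
    by (auto simp: vec_eq_iff)
  then show "a \<in> ppt (ebas p)"
    unfolding ppt_def by blast
qed (auto simp: ppt_def)

lemma indep2_ebas: "p \<noteq> q \<Longrightarrow> indep2 (ebas p) (ebas q)"
  unfolding indep2_def by (metis (no_types, lifting) vector_add_component vector_smult_component
    ebas_nth mult.right_neutral mult_zero_right add.right_neutral add_0 zero_index)

lemma pencil_ebas_subset_net: "p \<noteq> i \<Longrightarrow> q \<noteq> i \<Longrightarrow> pencil (ebas p) (ebas q) \<subseteq> insert 0 (net i)"
  by (auto simp: pencil_def net_def)

definition line_in_section :: "cvec \<Rightarrow> cvec \<Rightarrow> bool" where
  "line_in_section a b \<longleftrightarrow> (\<exists>x. dotc a x = 0 \<and> dotc b x \<noteq> 0) \<and>
     (\<forall>x. dotc a x = 0 \<longrightarrow> dotc b x = 0 \<longrightarrow> Fcub x = 0)"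

lemma irreducible_secI:
  assumes "a \<noteq> 0" and "\<And>b. \<not> line_in_section a b"
  shows "irreducible_sec a"
  using assms unfolding irreducible_sec_def reducible_sec_def line_in_section_def by fastforce

locale vertex_labelling =
  fixes i j k :: 4
  assumes labels: "{i, j, k} = {0, 2, 3}"
begin

lemma labels_distinct [simp]:
  "i \<noteq> 1" "j \<noteq> 1" "k \<noteq> 1" "i \<noteq> j" "i \<noteq> k" "j \<noteq> k"
  "1 \<noteq> i" "1 \<noteq> j" "1 \<noteq> k" "j \<noteq> i" "k \<noteq> i" "k \<noteq> j"
proof -
  have "card {i, j, k} = 3" "1 \<notin> {i, j, k}"
    using labels by simp_all
  then show "i \<noteq> 1" "j \<noteq> 1" "k \<noteq> 1" "i \<noteq> j" "i \<noteq> k" "j \<noteq> k"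
    "1 \<noteq> i" "1 \<noteq> j" "1 \<noteq> k" "j \<noteq> i" "k \<noteq> i" "k \<noteq> j"
    by (auto simp: card_insert_if split: if_splits)
qed

lemma swapped: "vertex_labelling i k j"
  by unfold_locales (use labels in \<open>simp add: insert_commute\<close>)

lemma UNIV_labels: "UNIV = {1, i, j, k}"
proof -
  have "card {1, i, j, k} = CARD(4)"
    by simp
  then show ?thesis
    by (metis card_subset_eq finite subset_UNIV)
qed

lemma all_labels: "(\<forall>m. P m) \<longleftrightarrow> P 1 \<and> P i \<and> P j \<and> P k"
  using UNIV_labels by (metis UNIV_I insertE empty_iff)

lemma dotc_labels: "dotc a x = a $ 1 * x $ 1 + a $ i * x $ i + a $ j * x $ j + a $ k * x $ k"
  by (simp add: dotc_def UNIV_labels add.assoc)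

lemma Fcub_labels: "Fcub x = x $ i * x $ j * x $ k - x $ 1 ^ 3"
proof -
  have "(\<Prod>m\<in>{i, j, k}. x $ m) = (\<Prod>m\<in>{0, 2, 3}. x $ m)"
    by (simp only: labels)
  then show ?thesis
    by (simp add: Fcub_def mult.assoc)
qed

definition coords :: "complex \<Rightarrow> complex \<Rightarrow> complex \<Rightarrow> complex \<Rightarrow> cvec" where
  "coords c1 ci cj ck = (\<chi> m. if m = 1 then c1 else if m = i then ci else if m = j then cj else ck)"

lemma coords_nth [simp]:
  "coords c1 ci cj ck $ 1 = c1" "coords c1 ci cj ck $ i = ci"
  "coords c1 ci cj ck $ j = cj" "coords c1 ci cj ck $ k = ck"
  by (simp_all add: coords_def)

lemma zero_iff_labels: "x = 0 \<longleftrightarrow> x $ 1 = 0 \<and> x $ i = 0 \<and> x $ j = 0 \<and> x $ k = 0"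
  by (simp add: vec_eq_iff all_labels)

lemma ppt_ebas_iff_labels:
  "x \<in> ppt (ebas i) \<longleftrightarrow> x $ i \<noteq> 0 \<and> x $ 1 = 0 \<and> x $ j = 0 \<and> x $ k = 0"
  "x \<in> ppt (ebas j) \<longleftrightarrow> x $ j \<noteq> 0 \<and> x $ 1 = 0 \<and> x $ i = 0 \<and> x $ k = 0"
  "x \<in> ppt (ebas k) \<longleftrightarrow> x $ k \<noteq> 0 \<and> x $ 1 = 0 \<and> x $ i = 0 \<and> x $ j = 0"
  by (auto simp: ppt_ebas_iff all_labels)

lemma Fcub_has_derivative_along:
  "((\<lambda>t. Fcub (x + t *s w)) has_field_derivative
     w $ i * x $ j * x $ k + x $ i * w $ j * x $ k + x $ i * x $ j * w $ k - 3 * x $ 1 ^ 2 * w $ 1) (at 0)"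
proof -
  have "(\<lambda>t. Fcub (x + t *s w)) =
      (\<lambda>t. (x $ i + t * w $ i) * (x $ j + t * w $ j) * (x $ k + t * w $ k) - (x $ 1 + t * w $ 1) ^ 3)"
    by (simp add: Fcub_labels)
  then show ?thesis
    by (auto intro!: derivative_eq_intros simp: algebra_simps)
qed

lemma sing_pt_iff: "sing_pt a x \<longleftrightarrow> x \<noteq> 0 \<and> dotc a x = 0 \<and> Fcub x = 0 \<and>
   (\<forall>w. dotc a w = 0 \<longrightarrow> w $ i * x $ j * x $ k + x $ i * w $ j * x $ k + x $ i * x $ j * w $ k
        - 3 * x $ 1 ^ 2 * w $ 1 = 0)"
  unfolding sing_pt_def using Fcub_has_derivative_along DERIV_unique by metis

lemma sing_pts_eq_vertex:
  assumes ai: "a $ i = 0" and aj: "a $ j \<noteq> 0" and ak: "a $ k \<noteq> 0"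
  shows "{x. sing_pt a x} = ppt (ebas i)"
proof
  show "{x. sing_pt a x} \<subseteq> ppt (ebas i)"
  proof
    fix x assume "x \<in> {x. sing_pt a x}"
    then have "x \<noteq> 0" "dotc a x = 0" "Fcub x = 0"
      and "x $ j * x $ k = 0"
      using ai by (auto simp: sing_pt_iff dest: spec[of _ "ebas i"])
    moreover from this have "x $ 1 = 0"
      by (auto simp: Fcub_labels)
    moreover from calculation have "a $ j * x $ j + a $ k * x $ k = 0"
      using ai by (simp add: dotc_labels)
    ultimately show "x \<in> ppt (ebas i)"
      using aj ak by (auto simp: ppt_ebas_iff_labels zero_iff_labels)
  qed
  show "ppt (ebas i) \<subseteq> {x. sing_pt a x}"
    using ai by (auto simp: sing_pt_iff ppt_ebas_iff_labels zero_iff_labels dotc_labels Fcub_labels)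
qed

lemma triple_line_sec_iff: "triple_line_sec a (ebas i) (ebas j) \<longleftrightarrow> a \<in> ppt (ebas k)"
proof
  assume "triple_line_sec a (ebas i) (ebas j)"
  then obtain b c where "a \<noteq> 0" "a $ i = 0" "a $ j = 0" "b $ i = 0" "b $ j = 0"
    and cube: "\<And>x. dotc a x = 0 \<Longrightarrow> Fcub x = c * dotc b x ^ 3"
    unfolding triple_line_sec_def by auto
  moreover have "a $ 1 = 0"
  proof -
    \<comment> \<open>c (b.x)^3 does not depend on x_i since b_i = 0, whereas F does unless a_1 = 0\<close>
    define x y where "x = coords (- a $ k) 1 1 (a $ 1)" and "y = coords (- a $ k) 0 1 (a $ 1)"
    have "dotc a x = 0" "dotc a y = 0" "dotc b x = dotc b y"
      using calculation by (simp_all add: x_def y_def dotc_labels algebra_simps)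
    then have "Fcub x = Fcub y"
      using cube by simp
    then show ?thesis
      by (simp add: x_def y_def Fcub_labels)
  qed
  ultimately show "a \<in> ppt (ebas k)"
    by (auto simp: ppt_ebas_iff_labels zero_iff_labels)
next
  assume "a \<in> ppt (ebas k)"
  then have "a $ k \<noteq> 0" "a $ 1 = 0" "a $ i = 0" "a $ j = 0"
    by (simp_all add: ppt_ebas_iff_labels)
  then show "triple_line_sec a (ebas i) (ebas j)"
    unfolding triple_line_sec_def
    by (intro conjI exI[of _ "ebas 1"] exI[of _ "-1"])
      (auto simp: zero_iff_labels dotc_labels Fcub_labels)
qed

context
  fixes a :: cvec
  assumes ai: "a $ i = 0" and a1: "a $ 1 \<noteq> 0" and aj: "a $ j \<noteq> 0" and ak: "a $ k \<noteq> 0"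
begin

lemma nodal_no_line: "\<not> line_in_section a b"
proof
  assume "line_in_section a b"
  then obtain x0 where x0: "dotc a x0 = 0" "dotc b x0 \<noteq> 0"
    and on_S: "\<And>x. dotc a x = 0 \<Longrightarrow> dotc b x = 0 \<Longrightarrow> Fcub x = 0"
    unfolding line_in_section_def by auto
  \<comment> \<open>coefficients of b on the plane after eliminating x_1\<close>
  define B2 B3 where "B2 = a $ 1 * b $ j - a $ j * b $ 1" and "B3 = a $ 1 * b $ k - a $ k * b $ 1"
  have restrict: "a $ 1 * dotc b x = a $ 1 * b $ i * x $ i + B2 * x $ j + B3 * x $ k"
    if "dotc a x = 0" for x
  proof -
    have "a $ 1 * dotc b x = a $ 1 * b $ i * x $ i + B2 * x $ j + B3 * x $ k + b $ 1 * dotc a x"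
      using ai by (simp add: B2_def B3_def dotc_labels algebra_simps)
    then show ?thesis
      using that by simp
  qed
  have not_all_zero: "\<not> (b $ i = 0 \<and> B2 = 0 \<and> B3 = 0)"
    using restrict[OF x0(1)] x0(2) a1 by auto
  show False
  proof (cases "b $ i = 0")
    case False
    define x where "x = coords (- a $ j) (- B2 / b $ i) (a $ 1) 0"
    have "dotc a x = 0"
      using ai by (simp add: x_def dotc_labels)
    moreover have "a $ 1 * dotc b x = 0"
      unfolding restrict[OF calculation] using False by (simp add: x_def field_simps)
    ultimately have "Fcub x = 0"
      using on_S a1 by simp
    then show False
      using aj by (simp add: x_def Fcub_labels)
  next
    case True
    define E where "E = a $ k * B2 - a $ j * B3"
    define x y where "x = coords E 0 (a $ 1 * B3) (- a $ 1 * B2)"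
      and "y = coords E 1 (a $ 1 * B3) (- a $ 1 * B2)"
    have "dotc a x = 0" "dotc a y = 0"
      using ai by (simp_all add: x_def y_def E_def dotc_labels algebra_simps)
    moreover have "a $ 1 * dotc b x = 0" "a $ 1 * dotc b y = 0"
      using True calculation by (simp_all add: restrict) (simp_all add: x_def y_def algebra_simps)
    ultimately have "Fcub x = 0" "Fcub y = 0"
      using on_S a1 by auto
    then have "E = 0" "a $ 1 * B3 * (a $ 1 * B2) = 0"
      by (simp_all add: x_def y_def Fcub_labels)
    then show False
      using not_all_zero True a1 aj ak unfolding E_def by auto
  qed
qed

lemma nodal_node_at: "node_at a (ebas i)"
proof -
  define u v where "u = coords (- a $ j) 0 (a $ 1) 0" and "v = coords (- a $ k) 0 0 (a $ 1)"
  have "indep3 (ebas i) u v"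
    unfolding indep3_def
  proof (intro allI impI)
    fix r s t :: complex
    assume "r *s ebas i + s *s u + t *s v = 0"
    then have "r = 0" "s * a $ 1 = 0" "t * a $ 1 = 0"
      by (simp_all add: u_def v_def zero_iff_labels)
    then show "r = 0 \<and> s = 0 \<and> t = 0"
      using a1 by simp
  qed
  moreover have "dotc a u = 0" "dotc a v = 0"
    using ai by (simp_all add: u_def v_def dotc_labels algebra_simps)
  moreover have "Fcub (ebas i + s *s u + t *s v) =
      0 * s^2 + a $ 1 ^ 2 * s * t + 0 * t^2 + a $ j ^ 3 * s^3 + 3 * a $ j ^ 2 * a $ k * s^2 * t
      + 3 * a $ j * a $ k ^ 2 * s * t^2 + a $ k ^ 3 * t^3" for s t
    by (simp add: u_def v_def Fcub_labels) (simp add: algebra_simps power2_eq_square power3_eq_cube)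
  moreover have "a \<noteq> 0" "dotc a (ebas i) = 0"
    using a1 ai by (simp_all add: zero_iff_labels)
  ultimately have "local_jet a (ebas i) 0 (a $ 1 ^ 2) 0 (a $ j ^ 3) (3 * a $ j ^ 2 * a $ k)
      (3 * a $ j * a $ k ^ 2) (a $ k ^ 3)"
    unfolding local_jet_def by blast
  then show ?thesis
    unfolding node_at_def using a1 by fastforce
qed

end

lemma quadf_conic:
  "quadf (\<chi> p q. if p = i \<and> q = j then 1 else if p = k \<and> q = k then c else 0) x
     = x $ i * x $ j + c * x $ k ^ 2"
  unfolding quadf_def by (simp add: UNIV_labels power2_eq_square)

lemma conic_line_plus_conic_sec:
  assumes ai: "a $ i = 0" and aj: "a $ j = 0" and a1: "a $ 1 \<noteq> 0" and ak: "a $ k \<noteq> 0"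
  shows "line_plus_conic_sec a (ebas i) (ebas j)"
proof -
  define c where "c = (a $ k / a $ 1) ^ 3"
  define M :: "complex ^ 4 ^ 4"
    where "M = (\<chi> p q. if p = i \<and> q = j then 1 else if p = k \<and> q = k then c else 0)"
  have Q: "quadf M x = x $ i * x $ j + c * x $ k ^ 2" for x
    unfolding M_def by (rule quadf_conic)
  have factor: "Fcub x = dotc (ebas k) x * quadf M x" if "dotc a x = 0" for x
  proof -
    have "a $ 1 * x $ 1 + a $ k * x $ k = 0"
      using that ai aj by (simp add: dotc_labels)
    then have "x $ 1 = - (a $ k / a $ 1) * x $ k"
      using a1 by (simp add: field_simps add_eq_0_iff)
    then show ?thesis
      by (simp add: Q Fcub_labels c_def power_mult_distrib algebra_simps power2_eq_square power3_eq_cube)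
  qed
  have irreducible_conic: "\<not> (\<exists>b1 b2. \<forall>x. dotc a x = 0 \<longrightarrow> quadf M x = dotc b1 x * dotc b2 x)"
  proof
    assume "\<exists>b1 b2. \<forall>x. dotc a x = 0 \<longrightarrow> quadf M x = dotc b1 x * dotc b2 x"
    then obtain b1 b2 where prod: "\<And>x. dotc a x = 0 \<Longrightarrow> quadf M x = dotc b1 x * dotc b2 x"
      by blast
    define w where "w = coords (- a $ k) 0 0 (a $ 1)"
    have in_plane: "dotc a (coords (- a $ k) s t (a $ 1)) = 0" "dotc a (coords 0 s t 0) = 0" for s t
      using ai aj by (simp_all add: dotc_labels algebra_simps)
    have ii: "b1 $ i * b2 $ i = 0"
      using prod[OF in_plane(2)[of 1 0]] by (simp add: Q dotc_labels)
    have jj: "b1 $ j * b2 $ j = 0"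
      using prod[OF in_plane(2)[of 0 1]] by (simp add: Q dotc_labels)
    have ij: "(b1 $ i + b1 $ j) * (b2 $ i + b2 $ j) = 1"
      using prod[OF in_plane(2)[of 1 1]] by (simp add: Q dotc_labels)
    have ww: "dotc b1 w * dotc b2 w = c * a $ 1 ^ 2"
      using prod[OF in_plane(1)[of 0 0]] by (simp add: Q w_def)
    have iw: "(b1 $ i + dotc b1 w) * (b2 $ i + dotc b2 w) = c * a $ 1 ^ 2"
      using prod[OF in_plane(1)[of 1 0]] by (simp add: Q dotc_labels w_def algebra_simps)
    have "dotc b1 w \<noteq> 0" "dotc b2 w \<noteq> 0"
      using ww a1 ak by (auto simp: c_def)
    moreover have "b1 $ i * dotc b2 w + b2 $ i * dotc b1 w = 0"
      using ii ww iw by (auto simp: algebra_simps)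
    ultimately have "b1 $ i = 0 \<and> b2 $ i = 0"
      using ii by auto
    then show False
      using ij jj by simp
  qed
  have off_line: "\<exists>x. dotc a x = 0 \<and> dotc (ebas k) x \<noteq> 0"
    using ai aj a1 by (intro exI[of _ "coords (- a $ k) 0 0 (a $ 1)"]) (simp add: dotc_labels)
  show ?thesis
    unfolding line_plus_conic_sec_def using ai aj a1
    by (intro conjI off_line allI impI factor irreducible_conic exI[of _ "ebas k"] exI[of _ M])
      (auto simp: zero_iff_labels Q)
qed

context
  fixes a :: cvec
  assumes a1: "a $ 1 = 0" and ai: "a $ i = 0" and aj: "a $ j \<noteq> 0" and ak: "a $ k \<noteq> 0"
begin

lemma cuspidal_no_line: "\<not> line_in_section a b"
proof
  assume "line_in_section a b"
  then have on_S: "\<And>x. dotc a x = 0 \<Longrightarrow> dotc b x = 0 \<Longrightarrow> Fcub x = 0"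
    unfolding line_in_section_def by auto
  have in_plane: "dotc a (coords r s (a $ k * t) (- a $ j * t)) = 0" for r s t
    using a1 ai by (simp add: dotc_labels algebra_simps)
  show False
  proof (cases "b $ i = 0")
    case False
    define x where "x = coords 1 (- b $ 1 / b $ i) 0 0"
    have "dotc b x = 0"
      using False by (simp add: x_def dotc_labels)
    then have "Fcub x = 0"
      using on_S in_plane[of 1 "- b $ 1 / b $ i" 0] by (simp add: x_def)
    then show False
      by (simp add: x_def Fcub_labels)
  next
    case bi: True
    define r where "r = b $ j * a $ k - b $ k * a $ j"
    define x y where "x = coords (- r) 0 (a $ k * b $ 1) (- a $ j * b $ 1)"
      and "y = coords (- r) 1 (a $ k * b $ 1) (- a $ j * b $ 1)"
    have "dotc b x = 0" "dotc b y = 0"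
      using bi by (simp_all add: x_def y_def r_def dotc_labels algebra_simps)
    then have "Fcub x = 0" "Fcub y = 0"
      using on_S in_plane[of "- r" 0 "b $ 1"] in_plane[of "- r" 1 "b $ 1"]
      by (simp_all add: x_def y_def)
    then have "b $ 1 = 0"
      using aj ak by (simp add: x_def y_def Fcub_labels)
    then have "Fcub (ebas 1) = 0"
      using on_S a1 bi by simp
    then show False
      by (simp add: Fcub_ebas)
  qed
qed

lemma cuspidal_sec_pts_lines:
  "sec_pts a \<inter> lineP (ebas i) (ebas j) = ppt (ebas i)"
  "sec_pts a \<inter> lineP (ebas i) (ebas k) = ppt (ebas i)"
  "coords 0 0 (a $ k) (- a $ j) \<in> sec_pts a \<inter> lineP (ebas j) (ebas k)"
  "sec_pts a \<inter> lineP (ebas j) (ebas k) \<inter> (ppt (ebas j) \<union> ppt (ebas k)) = {}"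
  using a1 ai aj ak
  by (auto simp: sec_pts_def lineP_ebas_iff all_labels ppt_ebas_iff_labels zero_iff_labels
      dotc_labels Fcub_labels algebra_simps)

lemma cuspidal_cusp_at: "cusp_at a (ebas i)"
proof -
  define v where "v = coords 0 0 (a $ k) (- a $ j)"
  have "indep3 (ebas i) (ebas 1) v"
    unfolding indep3_def
  proof (intro allI impI)
    fix r s t :: complex
    assume "r *s ebas i + s *s ebas 1 + t *s v = 0"
    then have "r = 0" "s = 0" "t * a $ k = 0"
      by (simp_all add: v_def zero_iff_labels)
    then show "r = 0 \<and> s = 0 \<and> t = 0"
      using ak by simp
  qed
  moreover have "dotc a (ebas 1) = 0" "dotc a v = 0"
    using a1 ai by (simp_all add: v_def dotc_labels algebra_simps)
  moreover have "Fcub (ebas i + s *s ebas 1 + t *s v) =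
      0 * s^2 + 0 * s * t + - (a $ j * a $ k) * t^2 + -1 * s^3 + 0 * s^2 * t + 0 * s * t^2 + 0 * t^3"
    for s t
    by (simp add: v_def Fcub_labels) (simp add: algebra_simps power2_eq_square power3_eq_cube)
  moreover have "a \<noteq> 0" "dotc a (ebas i) = 0"
    using aj ai by (simp_all add: zero_iff_labels)
  ultimately have "local_jet a (ebas i) 0 0 (- (a $ j * a $ k)) (-1) 0 0 0"
    unfolding local_jet_def by blast
  then show ?thesis
    unfolding cusp_at_def using aj ak
    by (intro exI[of _ 0] exI[of _ "- (a $ j * a $ k)"] exI[of _ "-1"]) auto
qed

end

lemma pencil_ebas_iff_labels:
  "a \<in> pencil (ebas j) (ebas k) \<longleftrightarrow> a $ 1 = 0 \<and> a $ i = 0"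
  "a \<in> pencil (ebas 1) (ebas k) \<longleftrightarrow> a $ i = 0 \<and> a $ j = 0"
  "a \<in> pencil (ebas 1) (ebas j) \<longleftrightarrow> a $ i = 0 \<and> a $ k = 0"
  by (simp_all add: pencil_ebas_iff all_labels)

lemma pencils_Int:
  "pencil (ebas j) (ebas k) \<inter> pencil (ebas 1) (ebas k) \<inter> pencil (ebas 1) (ebas j) \<subseteq> {0}"
  "pencil (ebas 1) (ebas k) \<inter> pencil (ebas 1) (ebas j) - {0} = ppt (ebas 1)"
  "pencil (ebas j) (ebas k) \<inter> pencil (ebas 1) (ebas k) - {0} = {a. triple_line_sec a (ebas i) (ebas j)}"
  by (auto simp: pencil_ebas_iff_labels ppt_ebas_iff ppt_ebas_iff_labels triple_line_sec_iff
      zero_iff_labels all_labels)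

lemma conic_pencil_Diff:
  "pencil (ebas 1) (ebas k) - (pencil (ebas j) (ebas k) \<union> pencil (ebas 1) (ebas j)) =
   pencil (ebas 1) (ebas k) - ({0} \<union> ppt (ebas 1) \<union> {a. triple_line_sec a (ebas i) (ebas j)})"
  using pencils_Int(2,3) zero_in_pencil by blast

lemma nodal_sections:
  "\<forall>a \<in> net i - (pencil (ebas j) (ebas k) \<union> pencil (ebas 1) (ebas k) \<union> pencil (ebas 1) (ebas j)).
     irreducible_sec a \<and> {x. sing_pt a x} = ppt (ebas i) \<and> node_at a (ebas i)"
    (is "\<forall>a \<in> ?generic. ?nodal a")
proof
  fix a assume "a \<in> ?generic"
  then have "a $ i = 0" "a $ 1 \<noteq> 0" "a $ j \<noteq> 0" "a $ k \<noteq> 0"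
    by (auto simp: net_def pencil_ebas_iff_labels)
  then show "?nodal a"
    by (simp add: irreducible_secI nodal_no_line sing_pts_eq_vertex nodal_node_at zero_iff_labels)
qed

lemma conic_sections:
  "\<forall>a \<in> pencil (ebas 1) (ebas k) - (pencil (ebas j) (ebas k) \<union> pencil (ebas 1) (ebas j)).
     line_plus_conic_sec a (ebas i) (ebas j)"
  by (auto simp: pencil_ebas_iff_labels intro: conic_line_plus_conic_sec)

lemma cuspidal_sections:
  "\<forall>a \<in> pencil (ebas j) (ebas k) - {0}.
     \<not> triple_line_sec a (ebas i) (ebas j) \<and> \<not> triple_line_sec a (ebas i) (ebas k) \<longrightarrow>
       irreducible_sec a \<and>
       sec_pts a \<inter> lineP (ebas i) (ebas j) = ppt (ebas i) \<and>
       sec_pts a \<inter> lineP (ebas i) (ebas k) = ppt (ebas i) \<and>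
       sec_pts a \<inter> lineP (ebas j) (ebas k) \<noteq> {} \<and>
       sec_pts a \<inter> lineP (ebas j) (ebas k) \<inter> (ppt (ebas j) \<union> ppt (ebas k)) = {} \<and>
       {x. sing_pt a x} = ppt (ebas i) \<and> cusp_at a (ebas i)"
    (is "\<forall>a \<in> _. _ \<longrightarrow> ?cuspidal a")
proof (intro ballI impI)
  fix a
  assume "a \<in> pencil (ebas j) (ebas k) - {0}"
    and "\<not> triple_line_sec a (ebas i) (ebas j) \<and> \<not> triple_line_sec a (ebas i) (ebas k)"
  then have "a $ 1 = 0" "a $ i = 0" "a $ j \<noteq> 0" "a $ k \<noteq> 0"
    using vertex_labelling.triple_line_sec_iff[OF swapped]
    by (auto simp: pencil_ebas_iff_labels triple_line_sec_iff ppt_ebas_iff_labels zero_iff_labels)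
  then show "?cuspidal a"
    using cuspidal_sec_pts_lines[of a]
    by (auto simp: irreducible_secI cuspidal_no_line sing_pts_eq_vertex cuspidal_cusp_at zero_iff_labels)
qed

end

theorem lemma4p10:
  shows "{a. a \<noteq> 0 \<and> a \<notin> net 0 \<union> net 2 \<union> net 3} =
           {a. a \<noteq> 0 \<and> ebas 0 \<notin> sec_pts a \<and> ebas 2 \<notin> sec_pts a \<and> ebas 3 \<notin> sec_pts a}
    \<and> (\<forall>i j k :: 4. {i, j, k} = {0, 2, 3} \<longrightarrow>
        (\<exists>u1 v1 u2 v2 u3 v3.
          indep2 u1 v1 \<and> indep2 u2 v2 \<and> indep2 u3 v3 \<and>
          pencil u1 v1 \<subseteq> insert 0 (net i) \<and> pencil u2 v2 \<subseteq> insert 0 (net i) \<and>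
          pencil u3 v3 \<subseteq> insert 0 (net i) \<and>
          pencil u1 v1 \<inter> pencil u2 v2 \<inter> pencil u3 v3 \<subseteq> {0} \<and>
          \<comment> \<open>(ii)\<close>
          (\<forall>a \<in> net i - (pencil u1 v1 \<union> pencil u2 v2 \<union> pencil u3 v3).
              irreducible_sec a \<and> {x. sing_pt a x} = ppt (ebas i) \<and> node_at a (ebas i)) \<and>
          \<comment> \<open>(iii)\<close>
          (pencil u2 v2 \<inter> pencil u3 v3) - {0} = ppt (ebas 1) \<and>
          (pencil u1 v1 \<inter> pencil u2 v2) - {0} = {a. triple_line_sec a (ebas i) (ebas j)} \<and>
          (pencil u1 v1 \<inter> pencil u3 v3) - {0} = {a. triple_line_sec a (ebas i) (ebas k)} \<and>
          \<comment> \<open>(iv)\<close>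
          pencil u2 v2 - (pencil u1 v1 \<union> pencil u3 v3) =
             pencil u2 v2 - ({0} \<union> ppt (ebas 1) \<union> {a. triple_line_sec a (ebas i) (ebas j)}) \<and>
          (\<forall>a \<in> pencil u2 v2 - (pencil u1 v1 \<union> pencil u3 v3).
              line_plus_conic_sec a (ebas i) (ebas j)) \<and>
          pencil u3 v3 - (pencil u1 v1 \<union> pencil u2 v2) =
             pencil u3 v3 - ({0} \<union> ppt (ebas 1) \<union> {a. triple_line_sec a (ebas i) (ebas k)}) \<and>
          (\<forall>a \<in> pencil u3 v3 - (pencil u1 v1 \<union> pencil u2 v2).
              line_plus_conic_sec a (ebas i) (ebas k)) \<and>
          \<comment> \<open>(v)\<close>
          (\<forall>a \<in> pencil u1 v1 - {0}. \<not> triple_line_sec a (ebas i) (ebas j) \<and>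
                \<not> triple_line_sec a (ebas i) (ebas k) \<longrightarrow>
              irreducible_sec a \<and>
              sec_pts a \<inter> lineP (ebas i) (ebas j) = ppt (ebas i) \<and>
              sec_pts a \<inter> lineP (ebas i) (ebas k) = ppt (ebas i) \<and>
              sec_pts a \<inter> lineP (ebas j) (ebas k) \<noteq> {} \<and>
              sec_pts a \<inter> lineP (ebas j) (ebas k) \<inter> (ppt (ebas j) \<union> ppt (ebas k)) = {} \<and>
              {x. sing_pt a x} = ppt (ebas i) \<and> cusp_at a (ebas i))))"
  apply (intro conjI[OF sections_avoiding_vertices] allI impI)
  subgoal premises labels for i j k
  proof -
    interpret vertex_labelling i j k
      using labels by unfold_locales
    interpret swapped: vertex_labelling i k j
      by (rule swapped)
    note swap = pencil_commute[of "ebas k" "ebas j"]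
    show ?thesis
      apply (rule exI[of _ "ebas j"], rule exI[of _ "ebas k"], rule exI[of _ "ebas 1"],
          rule exI[of _ "ebas k"], rule exI[of _ "ebas 1"], rule exI[of _ "ebas j"])
      using pencils_Int swapped.pencils_Int(3)[unfolded swap] conic_pencil_Diff
        swapped.conic_pencil_Diff[unfolded swap] nodal_sections conic_sections
        swapped.conic_sections[unfolded swap] cuspidal_sections
      by (intro conjI) (fact | simp add: indep2_ebas pencil_ebas_subset_net)+
  qed
  done

end
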